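(* Let $G$ be an $n$-isobicyclic group with canonical generators $x,y$, and let $P$ be an abelian normal Sylow $p$-subgroup of $G$, so $P=\langle x_p\rangle\times\langle y_p\rangle\cong C_{p^d}\times C_{p^d}$. Then $G$ acts diagonally on $P$ with respect to the basis $x_p,y_p$: there exists $\lambda\in\mathbb Z_{p^d}^*$ such that conjugation by $x$ fixes $x_p$ and sends $y_p\mapsto y_p^\lambda$, and conjugation by $y$ sends $x_p\mapsto x_p^\lambda$ and fixes $y_p$.
   Context: $G$ is $n$-isobicyclic with canonical generators $x,y$ if $X=\langle x\rangle$, $Y=\langle y\rangle$ are cyclic of order $n$, $G=XY$, $X\cap Y=1$, and some automorphism of $G$ transposes $x,y$. For a prime $p$, $x=x_px_{p'}$ and $y=y_py_{p'}$ are the factorisations into commuting elements of $p$-power and $p'$-order; $\langle x_p\rangle\langle y_p\rangle$ is a Sylow $p$-subgroup of $G$, equal to $P$ when $P$ is normal. *)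

theory Defs
  imports "HOL-Algebra.Algebra" "HOL-Algebra.Multiplicative_Group"
begin

definition isobicyclic :: "('a, 'b) monoid_scheme \<Rightarrow> nat \<Rightarrow> 'a \<Rightarrow> 'a \<Rightarrow> bool" where
  "isobicyclic G n x y \<longleftrightarrow>
     group G \<and> finite (carrier G) \<and> x \<in> carrier G \<and> y \<in> carrier G \<and>
     group.ord G x = n \<and> group.ord G y = n \<and>
     carrier G = generate G {x} <#>\<^bsub>G\<^esub> generate G {y} \<and>
     generate G {x} \<inter> generate G {y} = {\<one>\<^bsub>G\<^esub>} \<and>
     (\<exists>\<phi> \<in> iso G G. \<phi> x = y \<and> \<phi> y = x)"

definition p_part :: "('a, 'b) monoid_scheme \<Rightarrow> nat \<Rightarrow> 'a \<Rightarrow> 'a" where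
  "p_part G p g = (THE h. h \<in> carrier G \<and> h \<otimes>\<^bsub>G\<^esub> g = g \<otimes>\<^bsub>G\<^esub> h \<and>
       (\<exists>k. group.ord G h = p ^ k) \<and>
       coprime (group.ord G (g \<otimes>\<^bsub>G\<^esub> inv\<^bsub>G\<^esub> h)) p)"

definition sylow_subgroup :: "('a, 'b) monoid_scheme \<Rightarrow> nat \<Rightarrow> 'a set \<Rightarrow> bool" where
  "sylow_subgroup G p P \<longleftrightarrow> subgroup P G \<and> card P = p ^ multiplicity p (order G)"

end

theory Submission
  imports Defs
begin

text \<open>Write \<open>a = x\<^sub>p\<close>, \<open>b = y\<^sub>p\<close> and \<open>p\<^sup>d\<close> for their common order, so that
  \<open>P = \<langle>a\<rangle> \<times> \<langle>b\<rangle>\<close> and every element of \<open>P\<close> is \<open>a\<^sup>i b\<^sup>j\<close> with \<open>(i, j)\<close> determined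
  modulo \<open>p\<^sup>d\<close>. Conjugation by \<open>x\<close> fixes \<open>a\<close> and sends \<open>b\<close> to \<open>a\<^sup>r b\<^sup>s\<close>; the
  automorphism swapping \<open>x\<close> and \<open>y\<close> shows that conjugation by \<open>y\<close> fixes \<open>b\<close> and sends
  \<open>a\<close> to \<open>a\<^sup>s b\<^sup>r\<close>, so it remains to show \<open>p\<^sup>d | r\<close>. The index \<open>q\<close> of \<open>P\<close> is prime
  to \<open>p\<close> and \<open>x\<^sup>q \<in> P\<close> acts trivially on \<open>P\<close>, whence \<open>s\<^sup>q \<equiv> 1\<close> and
  \<open>r (1 + s + \<dots> + s\<^sup>q\<^sup>-\<^sup>1) \<equiv> 0\<close>; writing \<open>y x = x\<^sup>i y\<^sup>j\<close> and comparing the actions on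
  \<open>a\<close> gives \<open>r (r - (s - 1)) (r + (s - 1)) \<equiv> 0 (mod p\<^sup>d)\<close>. If \<open>p | s - 1\<close> the first
  congruence forces \<open>p\<^sup>d | r\<close>. Otherwise the only alternative is \<open>r \<equiv> \<plusminus>(s - 1)\<close>, which is
  impossible: then \<open>x\<^sup>q\<^sup>-\<^sup>1 y\<close> acts on \<open>P\<close> as a transvection whose \<open>q\<close>-th power is
  nontrivial, although that power lies in the abelian group \<open>P\<close>.\<close>

lemma geometric_sum_mod_eq:
  fixes s m :: int
  assumes "s mod m = 1 mod m"
  shows "(\<Sum>t<k. s ^ t) mod m = int k mod m"
proof (induction k)
  case (Suc k)
  have "s ^ k mod m = (s mod m) ^ k mod m"
    by (simp add: power_mod)
  also have "\<dots> = 1 mod m"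
    using assms by (simp add: power_mod)
  finally have s_pow: "s ^ k mod m = 1 mod m" .
  have "(\<Sum>t<Suc k. s ^ t) mod m = ((\<Sum>t<k. s ^ t) mod m + s ^ k mod m) mod m"
    by (simp add: mod_add_eq)
  also have "\<dots> = (int k mod m + 1 mod m) mod m"
    using Suc s_pow by simp
  also have "\<dots> = int (Suc k) mod m"
    by (simp add: mod_add_eq add.commute)
  finally show ?case .
qed simp

lemma prime_power_dvd_mult_cases:
  fixes p x y :: "'a :: normalization_semidom"
  assumes p: "Factorial_Ring.prime p" and xy: "p ^ d dvd x * y" and "\<not> (p dvd x \<and> p dvd y)"
  shows "p ^ d dvd x \<or> p ^ d dvd y"
proof (cases "d = 0")
  case False
  have "p ^ d dvd y * x"
    using xy by (simp add: mult.commute)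
  then show ?thesis
    using assms(3) prime_power_dvd_multD[OF prime_imp_prime_elem[OF p] xy]
      prime_power_dvd_multD[OF prime_imp_prime_elem[OF p]] False by blast
qed simp

lemma prime_power_dvd_mult_diff_squares_cases:
  fixes p r t :: int
  assumes p: "Factorial_Ring.prime p" and t: "\<not> p dvd t" "\<not> p dvd t + 1"
    and "p ^ d dvd r * ((r - t) * (r + t))"
  shows "p ^ d dvd r \<or> p ^ d dvd r - t \<or> p ^ d dvd r + t"
proof -
  have "\<not> (p dvd r - t \<and> p dvd r + t)"
  proof
    assume "p dvd r - t \<and> p dvd r + t"
    then have "p dvd (r + t) - (r - t)"
      using dvd_diff by blast
    moreover have "(r + t) - (r - t) = 2 * t"
      by simp
    ultimately have "p dvd 2 * t"
      by (simp only:)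
    then have "p dvd 2"
      using t(1) p prime_dvd_mult_iff by blast
    then have "p = 2"
      using prime_ge_2_int[OF p] zdvd_imp_le[of p 2] by simp
    then show False
      using t by auto
  qed
  moreover have "\<not> (p dvd r \<and> p dvd (r - t) * (r + t))"
  proof
    assume r: "p dvd r \<and> p dvd (r - t) * (r + t)"
    then have "p dvd r - t \<or> p dvd r + t"
      using p prime_dvd_mult_iff by blast
    then have "p dvd r - (r - t) \<or> p dvd (r + t) - r"
      using r dvd_diff by blast
    then show False
      using t(1) by simp
  qed
  ultimately show ?thesis
    using prime_power_dvd_mult_cases[OF p] assms(4) by blast
qed

lemma prime_power_dvd_of_dvd_mult_geometric_sum:
  fixes p r s :: int
  assumes p: "Factorial_Ring.prime p" and "p dvd s - 1" "\<not> p dvd int q"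
    and "p ^ d dvd r * (\<Sum>t<q. s ^ t)"
  shows "p ^ d dvd r"
proof -
  have "(\<Sum>t<q. s ^ t) mod p = int q mod p"
    using assms(2) by (intro geometric_sum_mod_eq) (simp add: mod_eq_dvd_iff)
  then have "\<not> p dvd (\<Sum>t<q. s ^ t)"
    using assms(3) by (simp add: mod_eq_0_iff_dvd[symmetric])
  then show ?thesis
    using prime_power_dvd_mult_cases[OF p assms(4)] by (cases "d = 0") auto
qed

lemma exists_nat_coprime_cong:
  fixes s :: int
  assumes p: "Factorial_Ring.prime p" and "coprime s (int (p ^ d))"
  shows "\<exists>l::nat. coprime l p \<and> int (p ^ d) dvd int l - s"
proof (cases "d = 0")
  case True
  then show ?thesis
    by (intro exI[of _ 1]) simp
next
  case False
  define l where "l = nat (s mod int (p ^ d))"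
  have l: "int l = s mod int (p ^ d)"
    using prime_gt_0_nat[OF p] by (simp add: l_def)
  then have "int (p ^ d) dvd int l - s"
    by (simp add: mod_eq_dvd_iff[symmetric])
  moreover have "coprime (int l) (int (p ^ d))"
    unfolding l using assms(2) prime_gt_0_nat[OF p] by (subst coprime_mod_left_iff) simp_all
  then have "coprime l p"
    using False by simp
  ultimately show ?thesis
    by blast
qed

definition conj_by :: "('a, 'b) monoid_scheme \<Rightarrow> 'a \<Rightarrow> 'a \<Rightarrow> 'a" where
  "conj_by G g h = inv\<^bsub>G\<^esub> g \<otimes>\<^bsub>G\<^esub> h \<otimes>\<^bsub>G\<^esub> g"

context group
begin

lemma pow_card_rcosets_mem_normal:
  assumes "P \<lhd> G" and g: "g \<in> carrier G"
  shows "g [^] card (rcosets P) \<in> P"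
proof -
  interpret N: normal P G by (rule assms(1))
  have "P #> g \<in> carrier (G Mod P)"
    using g unfolding FactGroup_def RCOSETS_def by auto
  then have "(P #> g) [^]\<^bsub>G Mod P\<^esub> order (G Mod P) = \<one>\<^bsub>G Mod P\<^esub>"
    by (rule group.pow_order_eq_1[OF N.factorgroup_is_group])
  moreover have "order (G Mod P) = card (rcosets P)"
    unfolding order_def FactGroup_def by simp
  ultimately have "P #> (g [^] card (rcosets P)) = P"
    using N.FactGroup_pow[OF g] by simp
  then show ?thesis
    using coset_join1 N.subgroup_axioms g by blast
qed

lemma mem_normal_of_pow_eq_one_coprime_index:
  assumes "P \<lhd> G" "finite (carrier G)" and g: "g \<in> carrier G"
    and "g [^] k = \<one>" "coprime k (card (rcosets P))"
  shows "g \<in> P"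
proof -
  interpret N: normal P G by (rule assms(1))
  have "card (rcosets P) * card P = order G"
    by (rule lagrange[OF N.subgroup_axioms])
  then have "card (rcosets P) \<noteq> 0"
    using assms(2) order_gt_0_iff_finite by (metis mult_0 not_less0)
  then obtain u t where "card (rcosets P) * u = k * t + 1"
    using bezout_nat[of "card (rcosets P)" k] assms(5) by (auto simp: coprime_commute)
  then have "(g [^] card (rcosets P)) [^] u = g"
    using g assms(4) by (simp add: nat_pow_pow nat_pow_mult[symmetric] nat_pow_pow[symmetric])
  moreover have "(g [^] card (rcosets P)) [^] int u \<in> P"
    using pow_card_rcosets_mem_normal[OF assms(1) g] N.subgroup_axioms
    by (rule subgroup_int_pow_closed[rotated])
  ultimately show ?thesis
    using g by (simp add: int_pow_int)
qed

lemma pow_eq_one_of_commuting_coprime_ord: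
  assumes g: "g \<in> carrier G" and h: "h \<in> carrier G" and "g \<otimes> h = h \<otimes> g"
    and "coprime (ord g) (ord h)" and "(g \<otimes> h) [^] (k::nat) = \<one>"
  shows "g [^] k = \<one>"
proof -
  have "g [^] k \<otimes> h [^] k = \<one>"
    using assms pow_mult_distrib[of g h k] by simp
  then have gk: "g [^] k = inv (h [^] k)"
    using g h by (simp add: inv_equality)
  have "ord (g [^] k) dvd ord g" "ord (h [^] k) dvd ord h"
    using g h by (metis dvd_triv_right nat_pow_closed nat_pow_pow pow_eq_id pow_ord_eq_1)+
  moreover have "ord (g [^] k) = ord (h [^] k)"
    using h by (simp add: gk)
  ultimately have "ord (g [^] k) dvd gcd (ord g) (ord h)"
    by simp
  then show ?thesis
    using assms(4) g ord_eq_1 by simp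
qed

lemma ord_pow_eq_of_ord_eq_mult:
  assumes g: "g \<in> carrier G" and ord_g: "ord g = N * m"
    and "m dvd c" and c: "int N dvd int c - 1"
  shows "ord (g [^] c) = N"
proof (rule dvd_antisym)
  have "ord g dvd c * N"
    using ord_g assms(3) by (simp add: mult.commute mult_dvd_mono)
  then have "(g [^] c) [^] N = \<one>"
    using g by (metis nat_pow_pow pow_eq_id)
  then show "ord (g [^] c) dvd N"
    using g by (metis nat_pow_closed pow_eq_id)
  have "ord g dvd c * ord (g [^] c)"
    using g by (metis nat_pow_closed nat_pow_pow pow_eq_id pow_ord_eq_1)
  then have "N dvd c * ord (g [^] c)"
    using ord_g by (metis dvd_mult_left)
  moreover have "coprime N c"
    using c by (meson coprime_diff_one_left coprime_divisors coprime_int_iff dvd_refl)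
  ultimately show "N dvd ord (g [^] c)"
    by (simp add: coprime_dvd_mult_right_iff)
qed

lemma p_part_eq_pow:
  assumes p: "Factorial_Ring.prime p" and g: "g \<in> carrier G"
    and ord_g: "ord g = p ^ d * m" and "coprime m p"
    and "m dvd c" and c: "int (p ^ d) dvd int c - 1"
  shows "p_part G p g = g [^] c"
  unfolding p_part_def
proof (rule the_equality)
  show "g [^] c \<in> carrier G \<and> g [^] c \<otimes> g = g \<otimes> g [^] c \<and>
      (\<exists>k. ord (g [^] c) = p ^ k) \<and> coprime (ord (g \<otimes> inv (g [^] c))) p"
  proof (intro conjI exI)
    show "g [^] c \<in> carrier G" "g [^] c \<otimes> g = g \<otimes> g [^] c"
      using g nat_pow_comm[of g c 1] by auto
    show "ord (g [^] c) = p ^ d"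
      using ord_pow_eq_of_ord_eq_mult[OF g ord_g] assms(5,6) .
    have "g \<otimes> inv (g [^] c) = g [^] (1 - int c)"
      using g by (simp add: int_pow_diff int_pow_int)
    moreover have "int (ord g) dvd (1 - int c) * int m"
      using ord_g c by (metis dvd_minus_iff minus_diff_eq mult_dvd_mono dvd_refl of_nat_mult)
    ultimately have "(g \<otimes> inv (g [^] c)) [^] int m = \<one>"
      using g by (simp add: int_pow_pow int_pow_eq_id)
    then have "ord (g \<otimes> inv (g [^] c)) dvd m"
      using g by (simp add: int_pow_eq_id)
    then show "coprime (ord (g \<otimes> inv (g [^] c))) p"
      using assms(4) by (metis coprime_divisors dvd_refl)
  qed
next
  fix h
  assume "h \<in> carrier G \<and> h \<otimes> g = g \<otimes> h \<and> (\<exists>k. ord h = p ^ k) \<and>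
      coprime (ord (g \<otimes> inv h)) p"
  then obtain k where h: "h \<in> carrier G" and hg: "h \<otimes> g = g \<otimes> h" and ord_h: "ord h = p ^ k"
    and coprime_g': "coprime (ord (g \<otimes> inv h)) p"
    by blast
  define g' where "g' = g \<otimes> inv h"
  have g': "g' \<in> carrier G"
    using g h by (simp add: g'_def)
  have g_eq: "g = g' \<otimes> h"
    using g h by (simp add: g'_def m_assoc)
  have comm: "g' \<otimes> h = h \<otimes> g'"
    using g h hg by (simp add: g'_def m_assoc[symmetric]) (simp add: m_assoc)
  have coprime_ord: "coprime (ord g') (ord h)"
    using coprime_g' by (simp add: ord_h g'_def)
  have "(g' \<otimes> h) [^] ord g = \<one>" "(h \<otimes> g') [^] ord g = \<one>"
    using g by (simp_all flip: g_eq comm)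
  then have "g' [^] ord g = \<one>" "h [^] ord g = \<one>"
    using pow_eq_one_of_commuting_coprime_ord[OF g' h comm coprime_ord]
      pow_eq_one_of_commuting_coprime_ord[OF h g' comm[symmetric]] coprime_ord
    by (simp_all add: coprime_commute)
  then have "ord g' dvd p ^ d * m" "ord h dvd p ^ d * m"
    using g' h ord_g by (simp_all add: pow_eq_id)
  moreover have "coprime (ord g') (p ^ d)" "coprime (ord h) m"
    using coprime_g' assms(4) by (simp_all add: g'_def ord_h coprime_commute)
  ultimately have "ord g' dvd m" "ord h dvd p ^ d"
    by (simp_all add: coprime_dvd_mult_right_iff coprime_dvd_mult_left_iff)
  moreover have "int (p ^ d) dvd 1 - int c"
    using c by (metis dvd_minus_iff minus_diff_eq)
  ultimately have "ord g' dvd c" "int (ord h) dvd 1 - int c"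
    using assms(5) by (auto intro: dvd_trans simp flip: of_nat_power)
  then have "g' [^] c = \<one>" "h [^] int c = h [^] (1::int)"
    using g' h by (simp_all only: pow_eq_id int_pow_eq)
  then have "g' [^] c = \<one>" "h [^] c = h"
    using h by (simp_all add: int_pow_int)
  then show "h = g [^] c"
    using g' h by (simp add: g_eq pow_mult_distrib[OF comm])
qed

lemma card_set_mult_of_inter_eq_one:
  assumes H: "subgroup H G" and K: "subgroup K G" and HK: "H \<inter> K = {\<one>}"
  shows "card (H <#> K) = card H * card K"
proof -
  have "H <#> K = (\<lambda>(h, k). h \<otimes> k) ` (H \<times> K)"
    unfolding set_mult_def by auto
  moreover have "inj_on (\<lambda>(h, k). h \<otimes> k) (H \<times> K)"
  proof (rule inj_onI, clarify)
    fix h k h' k'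
    assume in_HK: "h \<in> H" "k \<in> K" "h' \<in> H" "k' \<in> K" and eq: "h \<otimes> k = h' \<otimes> k'"
    then have carr: "h \<in> carrier G" "k \<in> carrier G" "h' \<in> carrier G" "k' \<in> carrier G"
      using subgroup.mem_carrier[OF H] subgroup.mem_carrier[OF K] by auto
    have "inv h' \<otimes> h = inv h' \<otimes> (h \<otimes> k) \<otimes> inv k"
      using carr by (simp add: m_assoc)
    also have "\<dots> = k' \<otimes> inv k"
      using carr by (simp add: eq m_assoc[symmetric])
    finally have "inv h' \<otimes> h = k' \<otimes> inv k" .
    moreover have "inv h' \<otimes> h \<in> H" "k' \<otimes> inv k \<in> K"
      using in_HK H K by (simp_all add: subgroup.m_closed subgroup.m_inv_closed)
    ultimately have "inv h' \<otimes> h \<in> H \<inter> K" "k' \<otimes> inv k \<in> H \<inter> K"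
      by simp_all
    then have "inv h' \<otimes> h = \<one>" "k' \<otimes> inv k = \<one>"
      using HK by blast+
    then show "h = h' \<and> k = k'"
      using carr by (simp add: inv_solve_left' inv_solve_right')
  qed
  ultimately show ?thesis
    by (simp add: card_image card_cartesian_product)
qed

lemma conj_by_hom:
  assumes g: "g \<in> carrier G"
  shows "conj_by G g \<in> hom G G"
proof (rule homI)
  fix h k
  assume "h \<in> carrier G" "k \<in> carrier G"
  moreover have "g \<otimes> (inv g \<otimes> k \<otimes> g) = k \<otimes> g" if "k \<in> carrier G" for k
    using g that by (simp add: m_assoc[symmetric])
  ultimately show "conj_by G g (h \<otimes> k) = conj_by G g h \<otimes> conj_by G g k"
    using g by (simp add: conj_by_def m_assoc)
qed (simp add: g conj_by_def)

lemma conj_by_mult: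
  "g \<in> carrier G \<Longrightarrow> k \<in> carrier G \<Longrightarrow> h \<in> carrier G \<Longrightarrow>
    conj_by G (g \<otimes> k) h = conj_by G k (conj_by G g h)"
  by (simp add: conj_by_def inv_mult_group m_assoc)

lemma conj_by_commuting:
  "g \<in> carrier G \<Longrightarrow> h \<in> carrier G \<Longrightarrow> h \<otimes> g = g \<otimes> h \<Longrightarrow> conj_by G g h = h"
  by (simp add: conj_by_def m_assoc) (simp add: m_assoc[symmetric])

lemma conj_by_mem_normal:
  "P \<lhd> G \<Longrightarrow> g \<in> carrier G \<Longrightarrow> h \<in> P \<Longrightarrow> conj_by G g h \<in> P"
  unfolding conj_by_def by (metis normal_inv_iff inv_closed inv_inv)

lemma hom_conj_by:
  "\<phi> \<in> hom G G \<Longrightarrow> g \<in> carrier G \<Longrightarrow> h \<in> carrier G \<Longrightarrow>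
    \<phi> (conj_by G g h) = conj_by G (\<phi> g) (\<phi> h)"
  using group_hom.hom_inv[of G G \<phi>] is_group
  by (simp add: conj_by_def hom_mult group_hom_def group_hom_axioms_def)

end

locale isobicyclic_abelian_sylow =
  fixes G (structure) and n p :: nat and x y :: 'a and P :: "'a set"
  assumes isobicyclic: "isobicyclic G n x y"
    and prime_p: "Factorial_Ring.prime p"
    and sylow: "sylow_subgroup G p P"
    and normal_P: "P \<lhd> G"
    and abelian_P: "\<forall>a\<in>P. \<forall>b\<in>P. a \<otimes> b = b \<otimes> a"

sublocale isobicyclic_abelian_sylow \<subseteq> group G
  using isobicyclic by (simp add: isobicyclic_def)

context isobicyclic_abelian_sylow
begin

lemma finite_carrier: "finite (carrier G)"
  and x_carrier [simp]: "x \<in> carrier G" and y_carrier [simp]: "y \<in> carrier G"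
  and ord_x: "ord x = n" and ord_y: "ord y = n"
  and carrier_eq: "carrier G = generate G {x} <#> generate G {y}"
  and generate_inter: "generate G {x} \<inter> generate G {y} = {\<one>}"
  using isobicyclic[unfolded isobicyclic_def] by blast+

lemma subgroup_P: "subgroup P G"
  and card_P_multiplicity: "card P = p ^ multiplicity p (order G)"
  using sylow by (simp_all add: sylow_subgroup_def)

lemma P_carrier: "h \<in> P \<Longrightarrow> h \<in> carrier G"
  using subgroup.mem_carrier[OF subgroup_P] .

lemma n_pos: "n > 0"
  using ord_ge_1[OF finite_carrier x_carrier] ord_x by simp

definition d :: nat where "d = multiplicity p n"

definition m :: nat where "m = n div p ^ d"

lemma n_eq: "n = p ^ d * m"
  by (simp add: m_def d_def multiplicity_dvd)

lemma coprime_m_p: "coprime m p"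
proof -
  have "\<not> p dvd m"
    using multiplicity_decompose[of n p] n_pos prime_gt_1_nat[OF prime_p]
    by (simp add: m_def d_def)
  then show ?thesis
    using prime_imp_coprime[OF prime_p] coprime_commute by blast
qed

definition c :: nat where "c = (SOME c. m dvd c \<and> int (p ^ d) dvd int c - 1)"

lemma c_props: "m dvd c" "int (p ^ d) dvd int c - 1"
proof -
  have "m \<noteq> 0"
    using n_eq n_pos by (metis mult_0_right less_irrefl)
  moreover have "coprime m (p ^ d)"
    using coprime_m_p by simp
  ultimately obtain u t where mu: "m * u = p ^ d * t + 1"
    using bezout_nat[of m "p ^ d"] by auto
  have "int (p ^ d) dvd int (m * u) - 1"
    by (simp only: mu) simp
  then have "\<exists>c. m dvd c \<and> int (p ^ d) dvd int c - 1"
    using dvd_triv_left by blast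
  then show "m dvd c" "int (p ^ d) dvd int c - 1"
    unfolding c_def by (metis (mono_tags, lifting) someI_ex)+
qed

definition a :: 'a where "a = p_part G p x"

definition b :: 'a where "b = p_part G p y"

lemma a_eq: "a = x [^] c" and b_eq: "b = y [^] c"
  using p_part_eq_pow[OF prime_p _ _ coprime_m_p c_props] ord_x ord_y n_eq
  by (simp_all add: a_def b_def)

lemma ord_a: "ord a = p ^ d" and ord_b: "ord b = p ^ d"
  using ord_pow_eq_of_ord_eq_mult[OF _ _ c_props] ord_x ord_y n_eq
  by (simp_all add: a_eq b_eq)

lemma a_carrier [simp]: "a \<in> carrier G" and b_carrier [simp]: "b \<in> carrier G"
  by (simp_all add: a_eq b_eq)

definition q :: nat where "q = card (rcosets P)"

lemma not_dvd_q: "\<not> p dvd q"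
proof -
  have "q * card P = order G"
    using lagrange[OF subgroup_P] by (simp add: q_def)
  moreover have "card P > 0"
    using card_P_multiplicity prime_gt_0_nat[OF prime_p] by simp
  ultimately have "q = order G div p ^ multiplicity p (order G)"
    using card_P_multiplicity by (metis nonzero_mult_div_cancel_right not_gr0)
  moreover have "order G > 0"
    using finite_carrier order_gt_0_iff_finite by blast
  ultimately show ?thesis
    using multiplicity_decompose[of "order G" p] prime_gt_1_nat[OF prime_p] by simp
qed

lemma coprime_q_p: "coprime q p"
  using not_dvd_q prime_imp_coprime[OF prime_p] coprime_commute by blast

lemma q_neq_0: "q \<noteq> 0"
  using not_dvd_q dvd_0_right by metis

lemma pow_q_mem_P: "g \<in> carrier G \<Longrightarrow> g [^] q \<in> P"
  unfolding q_def by (rule pow_card_rcosets_mem_normal[OF normal_P])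

lemma a_mem_P: "a \<in> P" and b_mem_P: "b \<in> P"
proof -
  have "coprime (p ^ d) (card (rcosets P))"
    using coprime_q_p by (simp add: q_def coprime_commute)
  then show "a \<in> P" "b \<in> P"
    using mem_normal_of_pow_eq_one_coprime_index[OF normal_P finite_carrier]
    by (metis a_carrier b_carrier ord_a ord_b pow_ord_eq_1)+
qed

lemma order_G: "order G = n * n"
proof -
  have "order G = card (generate G {x}) * card (generate G {y})"
    unfolding order_def carrier_eq
    by (rule card_set_mult_of_inter_eq_one[OF _ _ generate_inter]) (simp_all add: generate_is_subgroup)
  then show ?thesis
    using generate_pow_card ord_x ord_y by simp
qed

lemma card_P: "card P = p ^ d * p ^ d"
proof -
  have "multiplicity p (n * n) = d + d"
    using prime_elem_multiplicity_mult_distrib[of p n n] prime_p n_pos by (simp add: d_def)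
  then show ?thesis
    using card_P_multiplicity order_G by (simp add: power_add)
qed

lemma generate_a_subset: "generate G {a} \<subseteq> generate G {x}"
  and generate_b_subset: "generate G {b} \<subseteq> generate G {y}"
proof -
  have "x [^] c \<in> generate G {x}" "y [^] c \<in> generate G {y}"
    using generate_pow_nat ord_x ord_y n_pos by auto
  then show "generate G {a} \<subseteq> generate G {x}" "generate G {b} \<subseteq> generate G {y}"
    by (simp_all add: a_eq b_eq generate_subgroup_incl generate_is_subgroup)
qed

lemma P_eq_generate_mult: "P = generate G {a} <#> generate G {b}"
proof -
  have sub_a: "subgroup (generate G {a}) G" and sub_b: "subgroup (generate G {b}) G"
    by (simp_all add: generate_is_subgroup)
  have "generate G {a} \<inter> generate G {b} = {\<one>}"
    using generate_a_subset generate_b_subset generate_inter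
      subgroup.one_closed[OF sub_a] subgroup.one_closed[OF sub_b] by blast
  then have card_mult: "card (generate G {a} <#> generate G {b}) = card P"
    using card_set_mult_of_inter_eq_one[OF sub_a sub_b] generate_pow_card ord_a ord_b card_P
    by simp
  have "generate G {a} \<subseteq> P" "generate G {b} \<subseteq> P"
    using generate_subgroup_incl[OF _ subgroup_P] a_mem_P b_mem_P by auto
  then have "generate G {a} <#> generate G {b} \<subseteq> P"
    unfolding set_mult_def using subgroup.m_closed[OF subgroup_P] by blast
  moreover have "finite P"
    using finite_carrier subgroup.subset[OF subgroup_P] finite_subset by blast
  ultimately show ?thesis
    using card_mult card_subset_eq by blast
qed

definition ab_pow :: "int \<Rightarrow> int \<Rightarrow> 'a" where
  "ab_pow i j = a [^] i \<otimes> b [^] j"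

lemma ab_pow_mem_P: "ab_pow i j \<in> P"
  unfolding ab_pow_def
  using a_mem_P b_mem_P subgroup_int_pow_closed[OF subgroup_P] subgroup.m_closed[OF subgroup_P]
  by blast

lemma ab_pow_carrier [simp]: "ab_pow i j \<in> carrier G"
  using ab_pow_mem_P P_carrier by blast

lemma ab_pow_1_0: "ab_pow 1 0 = a" and ab_pow_0_1: "ab_pow 0 1 = b"
  by (simp_all add: ab_pow_def)

lemma ab_pow_0: "ab_pow 0 j = b [^] j"
  by (simp add: ab_pow_def)

lemma P_commute: "g \<in> P \<Longrightarrow> h \<in> P \<Longrightarrow> g \<otimes> h = h \<otimes> g"
  using abelian_P by blast

lemma a_b_pow_commute: "b [^] (j::int) \<otimes> a [^] (i::int) = a [^] i \<otimes> b [^] j"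
  using P_commute subgroup_int_pow_closed[OF subgroup_P] a_mem_P b_mem_P by blast

lemma ab_pow_mult: "ab_pow i j \<otimes> ab_pow k l = ab_pow (i + k) (j + l)"
proof -
  have "ab_pow i j \<otimes> ab_pow k l = a [^] i \<otimes> (b [^] j \<otimes> a [^] k) \<otimes> b [^] l"
    by (simp add: ab_pow_def m_assoc)
  also have "\<dots> = (a [^] i \<otimes> a [^] k) \<otimes> (b [^] j \<otimes> b [^] l)"
    by (simp add: a_b_pow_commute m_assoc)
  finally show ?thesis
    by (simp add: ab_pow_def int_pow_mult)
qed

lemma ab_pow_int_pow: "ab_pow i j [^] (z::int) = ab_pow (z * i) (z * j)"
  unfolding ab_pow_def
  using int_pow_mult_distrib[of "a [^] i" "b [^] j" z] a_b_pow_commute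
  by (simp add: int_pow_pow mult.commute)

lemma ab_pow_eq_one_iff: "ab_pow i j = \<one> \<longleftrightarrow> int (p ^ d) dvd i \<and> int (p ^ d) dvd j"
proof
  assume "ab_pow i j = \<one>"
  then have "inv (b [^] j) = a [^] i"
    unfolding ab_pow_def by (simp add: inv_equality)
  then have "a [^] i = b [^] (- j)"
    by (simp add: int_pow_neg)
  moreover have "a [^] i \<in> generate G {a}" "b [^] (- j) \<in> generate G {b}"
    using generate_pow by auto
  ultimately have "a [^] i \<in> generate G {x} \<inter> generate G {y}"
    "b [^] (- j) \<in> generate G {x} \<inter> generate G {y}"
    using generate_a_subset generate_b_subset by auto
  then have "a [^] i = \<one>" "b [^] (- j) = \<one>"
    using generate_inter by auto
  then show "int (p ^ d) dvd i \<and> int (p ^ d) dvd j"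
    by (simp add: int_pow_eq_id ord_a ord_b)
next
  assume "int (p ^ d) dvd i \<and> int (p ^ d) dvd j"
  then have "a [^] i = \<one>" "b [^] j = \<one>"
    by (simp_all add: int_pow_eq_id ord_a ord_b)
  then show "ab_pow i j = \<one>"
    by (simp add: ab_pow_def)
qed

lemma ab_pow_eq_iff:
  "ab_pow i j = ab_pow k l \<longleftrightarrow> int (p ^ d) dvd i - k \<and> int (p ^ d) dvd j - l"
proof -
  have "ab_pow (- k) (- l) \<otimes> ab_pow k l = \<one>"
    by (simp add: ab_pow_mult) (simp add: ab_pow_def)
  then have "inv (ab_pow k l) = ab_pow (- k) (- l)"
    by (simp add: inv_equality)
  then have "ab_pow i j = ab_pow k l \<longleftrightarrow> ab_pow i j \<otimes> ab_pow (- k) (- l) = \<one>"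
    using inv_solve_right'[of \<one> "ab_pow i j" "ab_pow k l"] by simp
  also have "\<dots> \<longleftrightarrow> int (p ^ d) dvd i - k \<and> int (p ^ d) dvd j - l"
    by (simp add: ab_pow_mult ab_pow_eq_one_iff)
  finally show ?thesis .
qed

lemma mem_P_ab_pow: "h \<in> P \<Longrightarrow> \<exists>i j. h = ab_pow i j"
  unfolding P_eq_generate_mult set_mult_def ab_pow_def by (auto simp: generate_pow)

definition swap :: "'a \<Rightarrow> 'a" where
  "swap = (SOME \<phi>. \<phi> \<in> iso G G \<and> \<phi> x = y \<and> \<phi> y = x)"

lemma swap_hom: "group_hom G G swap" and swap_x: "swap x = y" and swap_y: "swap y = x"
proof -
  have "\<exists>\<phi>. \<phi> \<in> iso G G \<and> \<phi> x = y \<and> \<phi> y = x"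
    using isobicyclic[unfolded isobicyclic_def] by blast
  then have "swap \<in> iso G G \<and> swap x = y \<and> swap y = x"
    unfolding swap_def by (rule someI_ex)
  then show "group_hom G G swap" "swap x = y" "swap y = x"
    by (auto simp: group_hom_def group_hom_axioms_def iso_def is_group)
qed

lemma swap_a: "swap a = b" and swap_b: "swap b = a"
  using group_hom.hom_nat_pow[OF swap_hom] by (simp_all add: a_eq b_eq swap_x swap_y)

lemma swap_ab_pow: "swap (ab_pow i j) = ab_pow j i"
  using group_hom.hom_int_pow[OF swap_hom] group_hom.hom_mult[OF swap_hom]
  by (simp add: ab_pow_def swap_a swap_b a_b_pow_commute)

lemma swap_conj_by:
  "g \<in> carrier G \<Longrightarrow> h \<in> carrier G \<Longrightarrow> swap (conj_by G g h) = conj_by G (swap g) (swap h)"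
  using hom_conj_by[of swap] swap_hom by (simp add: group_hom_def group_hom_axioms_def)

lemma conj_by_ab_pow:
  assumes g: "g \<in> carrier G"
    and "conj_by G g a = ab_pow i\<^sub>1 j\<^sub>1" and "conj_by G g b = ab_pow i\<^sub>2 j\<^sub>2"
  shows "conj_by G g (ab_pow i j) = ab_pow (i * i\<^sub>1 + j * i\<^sub>2) (i * j\<^sub>1 + j * j\<^sub>2)"
proof -
  have "group_hom G G (conj_by G g)"
    using conj_by_hom[OF g] by (simp add: group_hom_def group_hom_axioms_def is_group)
  then have "conj_by G g (ab_pow i j) = conj_by G g a [^] i \<otimes> conj_by G g b [^] j"
    by (simp add: ab_pow_def group_hom.hom_mult group_hom.hom_int_pow)
  then show ?thesis
    using assms by (simp add: ab_pow_int_pow ab_pow_mult)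
qed

lemma conj_by_P: "g \<in> P \<Longrightarrow> h \<in> P \<Longrightarrow> conj_by G g h = h"
  using conj_by_commuting P_commute P_carrier by metis

lemma conj_by_x_pow_a: "conj_by G (x [^] (k::nat)) a = a"
  and conj_by_y_pow_b: "conj_by G (y [^] (k::nat)) b = b"
  by (simp_all add: conj_by_commuting a_eq b_eq nat_pow_comm)

end

locale isobicyclic_abelian_sylow_action = isobicyclic_abelian_sylow +
  fixes r s :: int
  assumes conj_x_b: "conj_by G x b = ab_pow r s"
begin

lemma conj_y_a: "conj_by G y a = ab_pow s r"
  using swap_conj_by[of x b] conj_x_b by (simp add: swap_x swap_b swap_ab_pow)

lemma conj_x_ab_pow: "conj_by G x (ab_pow i j) = ab_pow (i + j * r) (j * s)"
proof -
  have "conj_by G x a = ab_pow 1 0"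
    using conj_by_x_pow_a[of 1] by (simp add: ab_pow_1_0)
  then show ?thesis
    using conj_by_ab_pow[OF x_carrier _ conj_x_b] by simp
qed

lemma conj_y_ab_pow: "conj_by G y (ab_pow i j) = ab_pow (i * s) (i * r + j)"
proof -
  have "conj_by G y b = ab_pow 0 1"
    using conj_by_y_pow_b[of 1] by (simp add: ab_pow_0_1)
  then show ?thesis
    using conj_by_ab_pow[OF y_carrier conj_y_a] by simp
qed

lemma conj_x_pow_b: "conj_by G (x [^] k) b = ab_pow (r * (\<Sum>t<k. s ^ t)) (s ^ k)"
proof (induction k)
  case 0
  show ?case
    by (simp add: conj_by_def ab_pow_0_1)
next
  case (Suc k)
  then show ?case
    by (simp add: conj_by_mult conj_x_ab_pow algebra_simps)
qed

lemma conj_y_pow_a: "conj_by G (y [^] k) a = ab_pow (s ^ k) (r * (\<Sum>t<k. s ^ t))"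
  using swap_conj_by[of "x [^] k" b] group_hom.hom_nat_pow[OF swap_hom]
  by (simp add: conj_x_pow_b swap_x swap_b swap_ab_pow)

lemma index_congruences: "int (p ^ d) dvd s ^ q - 1" "int (p ^ d) dvd r * (\<Sum>t<q. s ^ t)"
proof -
  have "conj_by G (x [^] q) b = b"
    using conj_by_P[OF pow_q_mem_P b_mem_P] by simp
  then have "ab_pow (r * (\<Sum>t<q. s ^ t)) (s ^ q) = ab_pow 0 1"
    by (simp add: conj_x_pow_b ab_pow_0_1)
  then show "int (p ^ d) dvd s ^ q - 1" "int (p ^ d) dvd r * (\<Sum>t<q. s ^ t)"
    by (simp_all add: ab_pow_eq_iff)
qed

lemma product_congruences:
  obtains j where "int (p ^ d) dvd s + r * r - s ^ j"
    and "int (p ^ d) dvd r * s - r * (\<Sum>t<j. s ^ t)"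
proof -
  have "y \<otimes> x \<in> generate G {x} <#> generate G {y}"
    by (metis carrier_eq m_closed x_carrier y_carrier)
  then obtain i j :: nat where yx: "y \<otimes> x = x [^] i \<otimes> y [^] j"
    using generate_pow_nat ord_x ord_y n_pos by (auto simp: set_mult_def)
  have "conj_by G (y \<otimes> x) a = ab_pow (s + r * r) (r * s)"
    by (simp add: conj_by_mult conj_y_a conj_x_ab_pow)
  moreover have "conj_by G (x [^] i \<otimes> y [^] j) a = ab_pow (s ^ j) (r * (\<Sum>t<j. s ^ t))"
    by (simp add: conj_by_mult conj_by_x_pow_a conj_y_pow_a)
  ultimately have "ab_pow (s + r * r) (r * s) = ab_pow (s ^ j) (r * (\<Sum>t<j. s ^ t))"
    by (simp add: yx)
  then show ?thesis
    using that unfolding ab_pow_eq_iff by blast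
qed

lemma coprime_s: "coprime s (int (p ^ d))"
proof (rule coprimeI)
  fix e
  assume e: "e dvd s" "e dvd int (p ^ d)"
  have "e dvd s ^ q"
    using e(1) q_neq_0 dvd_power[of q s] dvd_trans by blast
  moreover have "e dvd s ^ q - 1"
    using e(2) index_congruences(1) by (rule dvd_trans)
  ultimately have "e dvd s ^ q - (s ^ q - 1)"
    by (rule dvd_diff)
  then show "is_unit e"
    by simp
qed

lemma dvd_r_diff_squares: "int (p ^ d) dvd r * ((r - (s - 1)) * (r + (s - 1)))"
proof -
  obtain j where j: "int (p ^ d) dvd s + r * r - s ^ j"
    "int (p ^ d) dvd r * s - r * (\<Sum>t<j. s ^ t)"
    by (rule product_congruences)
  have "r * ((r - (s - 1)) * (r + (s - 1)))
      = r * (s + r * r - s ^ j) - (s - 1) * (r * s - r * (\<Sum>t<j. s ^ t))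
        - r * ((s - 1) * (\<Sum>t<j. s ^ t) - (s ^ j - 1))"
    by (simp add: algebra_simps)
  also have "(s - 1) * (\<Sum>t<j. s ^ t) = s ^ j - 1"
    using power_diff_1_eq[of s j] by simp
  finally have "r * ((r - (s - 1)) * (r + (s - 1)))
      = r * (s + r * r - s ^ j) - (s - 1) * (r * s - r * (\<Sum>t<j. s ^ t))"
    by simp
  then show ?thesis
    using j by (simp add: dvd_diff)
qed

text \<open>Since \<open>x\<^sup>q\<close> acts trivially on \<open>P\<close>, conjugation by \<open>x\<^sup>q\<^sup>-\<^sup>1\<close> is inverse to conjugation by \<open>x\<close>
  there. If \<open>r \<equiv> e (s - 1)\<close> with \<open>e\<^sup>2 = 1\<close>, then \<open>a b\<^sup>e\<close> is an eigenvector of both \<open>x\<close> and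
  \<open>y\<close> with eigenvalue \<open>s\<close>, so \<open>x\<^sup>q\<^sup>-\<^sup>1 y\<close> fixes it and moves \<open>a\<close> by \<open>(a b\<^sup>e)\<^sup>s\<^sup>-\<^sup>1\<close>.\<close>

definition transvection :: 'a where
  "transvection = x [^] (q - 1) \<otimes> y"

lemma transvection_carrier [simp]: "transvection \<in> carrier G"
  by (simp add: transvection_def)

context
  fixes e :: int
  assumes e_sq: "e * e = 1" and r_eq: "int (p ^ d) dvd r - e * (s - 1)"
begin

lemma conj_x_line: "conj_by G x (ab_pow z (e * z)) = ab_pow (s * z) (e * (s * z))"
proof -
  have "(z + e * z * r) - s * z = z * e * (r - e * (s - 1)) - z * (1 - e * e) * (s - 1)"
    by (simp add: algebra_simps)
  then have "int (p ^ d) dvd (z + e * z * r) - s * z"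
    using r_eq e_sq by simp
  then show ?thesis
    by (simp add: conj_x_ab_pow ab_pow_eq_iff algebra_simps)
qed

lemma conj_y_line: "conj_by G y (ab_pow z (e * z)) = ab_pow (s * z) (e * (s * z))"
proof -
  have "(z * r + e * z) - e * (s * z) = z * (r - e * (s - 1))"
    by (simp add: algebra_simps)
  then have "int (p ^ d) dvd (z * r + e * z) - e * (s * z)"
    using r_eq by simp
  then show ?thesis
    by (simp add: conj_y_ab_pow ab_pow_eq_iff algebra_simps)
qed

lemma conj_x_pow_line:
  "conj_by G (x [^] k) (ab_pow z (e * z)) = ab_pow (s ^ k * z) (e * (s ^ k * z))"
proof (induction k)
  case 0
  then show ?case
    by (simp add: conj_by_def)
next
  case (Suc k)
  then show ?case
    by (simp add: conj_by_mult conj_x_line mult.assoc)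
qed

lemma conj_transvection_line: "conj_by G transvection (ab_pow z (e * z)) = ab_pow z (e * z)"
proof -
  have "conj_by G transvection (ab_pow z (e * z))
      = conj_by G y (ab_pow (s ^ (q - 1) * z) (e * (s ^ (q - 1) * z)))"
    by (simp add: transvection_def conj_by_mult conj_x_pow_line)
  also have "\<dots> = ab_pow (s * (s ^ (q - 1) * z)) (e * (s * (s ^ (q - 1) * z)))"
    by (rule conj_y_line)
  also have "s * (s ^ (q - 1) * z) = s ^ q * z"
    using q_neq_0 by (simp add: power_eq_if mult.assoc)
  finally have "conj_by G transvection (ab_pow z (e * z)) = ab_pow (s ^ q * z) (e * (s ^ q * z))" .
  moreover have "s ^ q * z - z = (s ^ q - 1) * z" "e * (s ^ q * z) - e * z = e * ((s ^ q - 1) * z)"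
    by (simp_all add: algebra_simps)
  then have "int (p ^ d) dvd s ^ q * z - z" "int (p ^ d) dvd e * (s ^ q * z) - e * z"
    using index_congruences(1) by (metis dvd_mult dvd_mult2)+
  ultimately show ?thesis
    by (simp add: ab_pow_eq_iff)
qed

lemma conj_transvection_pow_a:
  "conj_by G (transvection [^] k) a = ab_pow (1 + int k * (s - 1)) (e * (int k * (s - 1)))"
proof (induction k)
  case 0
  then show ?case
    by (simp add: conj_by_def ab_pow_1_0)
next
  case (Suc k)
  have conj_a: "conj_by G transvection a = ab_pow s (e * (s - 1))"
    using conj_y_a r_eq by (simp add: transvection_def conj_by_mult conj_by_x_pow_a ab_pow_eq_iff)
  have "ab_pow (1 + int k * (s - 1)) (e * (int k * (s - 1)))
      = a \<otimes> ab_pow (int k * (s - 1)) (e * (int k * (s - 1)))"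
    by (simp add: ab_pow_mult flip: ab_pow_1_0)
  then have "conj_by G (transvection [^] Suc k) a
      = conj_by G transvection (a \<otimes> ab_pow (int k * (s - 1)) (e * (int k * (s - 1))))"
    using Suc by (simp add: conj_by_mult)
  also have "\<dots> = ab_pow s (e * (s - 1)) \<otimes> ab_pow (int k * (s - 1)) (e * (int k * (s - 1)))"
    using hom_mult[OF conj_by_hom[OF transvection_carrier]] by (simp add: conj_a conj_transvection_line)
  finally show ?case
    by (simp add: ab_pow_mult algebra_simps)
qed

lemma p_dvd_s_minus_1:
  assumes "d > 0"
  shows "int p dvd s - 1"
proof -
  have "conj_by G (transvection [^] q) a = a"
    by (rule conj_by_P[OF pow_q_mem_P a_mem_P]) simp
  then have "ab_pow (1 + int q * (s - 1)) (e * (int q * (s - 1))) = ab_pow 1 0"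
    unfolding conj_transvection_pow_a ab_pow_1_0 .
  then have "int (p ^ d) dvd int q * (s - 1)"
    by (simp add: ab_pow_eq_iff)
  moreover have "int p dvd int (p ^ d)"
    using assms by (simp add: dvd_power)
  ultimately have "int p dvd int q * (s - 1)"
    by (meson dvd_trans)
  then show ?thesis
    using not_dvd_q prime_p by (simp add: prime_dvd_mult_iff)
qed

end

lemma pd_dvd_r: "int (p ^ d) dvd r"
proof (cases "d = 0")
  case False
  have p: "Factorial_Ring.prime (int p)"
    using prime_p by simp
  have "\<not> int p dvd s"
  proof
    assume "int p dvd s"
    moreover have "int p dvd int (p ^ d)"
      using False by (simp add: dvd_power)
    ultimately have "is_unit (int p)"
      using coprime_s coprime_common_divisor by blast
    then show False
      using p by (simp add: prime_elem_not_unit)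
  qed
  show ?thesis
  proof (cases "int p dvd s - 1")
    case True
    then show ?thesis
      using prime_power_dvd_of_dvd_mult_geometric_sum[OF p True, of q d r]
        index_congruences(2) not_dvd_q
      by simp
  next
    case False
    have "int (p ^ d) dvd r \<or> int (p ^ d) dvd r - (s - 1) \<or> int (p ^ d) dvd r + (s - 1)"
      using prime_power_dvd_mult_diff_squares_cases[OF p False, of d r]
        \<open>\<not> int p dvd s\<close> dvd_r_diff_squares
      by simp
    moreover have "\<not> int (p ^ d) dvd r - 1 * (s - 1)" "\<not> int (p ^ d) dvd r - (- 1) * (s - 1)"
      using p_dvd_s_minus_1[of 1] p_dvd_s_minus_1[of "- 1"] False \<open>d \<noteq> 0\<close> by auto
    moreover have "r - 1 * (s - 1) = r - (s - 1)" "r - (- 1) * (s - 1) = r + (s - 1)"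
      by simp_all
    ultimately show ?thesis
      by (simp only:) simp
  qed
qed simp

lemma conj_x_b_eq: "conj_by G x b = b [^] s"
  using conj_x_b pd_dvd_r by (simp add: ab_pow_eq_iff flip: ab_pow_0)

end

context isobicyclic_abelian_sylow
begin

lemma conj_p_parts:
  "\<exists>l::nat. coprime l p \<and> conj_by G x a = a \<and> conj_by G x b = b [^] l \<and>
     conj_by G y a = a [^] l \<and> conj_by G y b = b"
proof -
  obtain r s where rs: "conj_by G x b = ab_pow r s"
    using mem_P_ab_pow[OF conj_by_mem_normal[OF normal_P x_carrier b_mem_P]] by blast
  interpret action: isobicyclic_abelian_sylow_action G n p x y P r s
    by (intro isobicyclic_abelian_sylow_action.intro isobicyclic_abelian_sylow_axioms
        isobicyclic_abelian_sylow_action_axioms.intro rs)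
  obtain l :: nat where l: "coprime l p" "int (p ^ d) dvd int l - s"
    using exists_nat_coprime_cong[OF prime_p action.coprime_s] by blast
  have "b [^] s = b [^] int l"
    using l(2) by (simp add: int_pow_eq ord_b)
  then have x_b: "conj_by G x b = b [^] l"
    by (simp add: action.conj_x_b_eq int_pow_int)
  have "conj_by G y a = swap (conj_by G x b)"
    by (simp add: swap_conj_by swap_x swap_b)
  also have "\<dots> = a [^] l"
    using group_hom.hom_nat_pow[OF swap_hom] by (simp add: x_b swap_b)
  finally show ?thesis
    using l(1) x_b conj_by_x_pow_a[of 1] conj_by_y_pow_b[of 1] by auto
qed

end

theorem proposition7p2:
  fixes G (structure) and n p :: nat and x y :: 'a and P :: "'a set"
  assumes "isobicyclic G n x y"
    and "Factorial_Ring.prime p"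
    and "sylow_subgroup G p P"
    and "P \<lhd> G"
    and "\<forall>a\<in>P. \<forall>b\<in>P. a \<otimes> b = b \<otimes> a"
  shows "\<exists>l::nat. coprime l p \<and>
           inv x \<otimes> p_part G p x \<otimes> x = p_part G p x \<and>
           inv x \<otimes> p_part G p y \<otimes> x = p_part G p y [^] (l::nat) \<and>
           inv y \<otimes> p_part G p x \<otimes> y = p_part G p x [^] (l::nat) \<and>
           inv y \<otimes> p_part G p y \<otimes> y = p_part G p y"
proof -
  interpret isobicyclic_abelian_sylow G n p x y P
    using assms by (rule isobicyclic_abelian_sylow.intro)
  show ?thesis
    using conj_p_parts by (simp add: conj_by_def a_def b_def)
qed

end
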